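(* Consider MINTIME under the independent cascade model with budget $k$ and coverage threshold $\eta$, and let $R_{\mathit{OPT}}$ be the optimal propagation time. Let $\epsilon>0$, use coverage threshold $\eta-\epsilon$ and budget threshold $k(1+\ln(\eta/\epsilon))$. If the coverage function $\sigma^R(\cdot)$ can be computed exactly, then there is a greedy algorithm (greedy seed selection for coverage within $R$ steps, combined with a linear search over $R=0,\dots,n-1$) that approximates MINTIME within an $(\alpha,\beta,\gamma)$ factor with $\alpha=1$, $\beta=1+\ln(\eta/\epsilon)$ and $\gamma=1-\epsilon/\eta$, i.e., it outputs $S$ and $R$ with $|S|\le\beta k$, $R\le\alpha R_{\mathit{OPT}}$ and $\sigma^R(S)\ge\gamma\eta$. Furthermore, for every $\phi>0$ there is a $\delta>0$ such that, using $(1-\delta)$-approximate values of $\sigma^R(\cdot)$, the greedy algorithm approximates MINTIME within an $(\alpha,\beta,\gamma)$ factor with $\alpha=1$, $\beta=(1+\phi)(1+\ln(\eta/\epsilon))$ and $\gamma=1-\epsilon/\eta$.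
   Context: Independent cascade (IC) model on a directed graph $G=(V,E)$, $n=|V|$, with arc probabilities $p_{v,u}$: seed nodes are active at time $0$; when a node $v$ becomes active at time $t$, it has one chance to activate each inactive out-neighbour $u$, succeeding independently with probability $p_{v,u}$, in which case $u$ becomes active at time $t+1$. $\sigma^R(S)$ denotes the expected number of nodes active by time $R$ with seed set $S$. MINTIME: given $G$, an integer $k$ and a real $\eta\le|V|$, find $S\subseteq V$ with $|S|\le k$ and the smallest $t\in\mathbb{N}$ with $\sigma^t(S)\ge\eta$; $R_{\mathit{OPT}}$ is this smallest $t$. The greedy step for fixed $R$: start with $S=\emptyset$ and, while $\sigma^R(S)<\eta-\epsilon$, add a node $w\notin S$ maximizing $\min(\sigma^R(S\cup\{w\}),\eta)-\sigma^R(S)$. Using $(1-\delta)$-approximate values means replacing $\sigma^R$ by an estimate $\sigma'$ with $(1-\delta)\sigma^R(S)\le\sigma'(S)\le\sigma^R(S)$ for all $S$. *)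

theory Defs
  imports Complex_Main
begin

text \<open>Randomness of the IC process: every arc e is equipped with an independent
coin that succeeds with probability p e.  W is the set of arcs whose coin succeeds.
The coin of arc (v,u) is only consulted when v becomes active (exactly once), so
the process is faithfully simulated by sampling all coins up front.
ic_state W S t = (set of nodes active by time t, set of nodes activated exactly at time t).\<close>

fun ic_state :: "('a \<times> 'a) set \<Rightarrow> 'a set \<Rightarrow> nat \<Rightarrow> 'a set \<times> 'a set" where
  "ic_state W S 0 = (S, S)"
| "ic_state W S (Suc t) =
     (let A = fst (ic_state W S t);
          F = snd (ic_state W S t);
          N = {u. \<exists>v\<in>F. (v, u) \<in> W} - A
      in (A \<union> N, N))"

definition active_by :: "('a \<times> 'a) set \<Rightarrow> 'a set \<Rightarrow> nat \<Rightarrow> 'a set" where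
  "active_by W S t = fst (ic_state W S t)"

definition world_prob :: "('a \<times> 'a) set \<Rightarrow> ('a \<times> 'a \<Rightarrow> real) \<Rightarrow> ('a \<times> 'a) set \<Rightarrow> real" where
  "world_prob E p W = (\<Prod>e\<in>W. p e) * (\<Prod>e\<in>E - W. 1 - p e)"

definition sigma :: "('a \<times> 'a) set \<Rightarrow> ('a \<times> 'a \<Rightarrow> real) \<Rightarrow> nat \<Rightarrow> 'a set \<Rightarrow> real" where
  "sigma E p R S = (\<Sum>W\<in>Pow E. world_prob E p W * real (card (active_by W S R)))"

definition R_opt :: "'a set \<Rightarrow> ('a \<times> 'a) set \<Rightarrow> ('a \<times> 'a \<Rightarrow> real) \<Rightarrow> nat \<Rightarrow> real \<Rightarrow> nat" where
  "R_opt V E p k \<eta> = (LEAST t. \<exists>S\<subseteq>V. card S \<le> k \<and> \<eta> \<le> sigma E p t S)"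

definition gain :: "('a set \<Rightarrow> real) \<Rightarrow> real \<Rightarrow> 'a set \<Rightarrow> 'a \<Rightarrow> real" where
  "gain f \<eta> S w = min (f (insert w S)) \<eta> - f S"

definition greedy_choices :: "('a set \<Rightarrow> real) \<Rightarrow> real \<Rightarrow> 'a set \<Rightarrow> 'a set \<Rightarrow> 'a set" where
  "greedy_choices f \<eta> V S = {w \<in> V - S. \<forall>w'\<in>V - S. gain f \<eta> S w' \<le> gain f \<eta> S w}"

text \<open>A tie-breaking rule: sel S C picks an element of the nonempty candidate set C.\<close>
definition valid_sel :: "('a set \<Rightarrow> 'a set \<Rightarrow> 'a) \<Rightarrow> bool" where
  "valid_sel sel \<longleftrightarrow> (\<forall>S C. C \<noteq> {} \<longrightarrow> sel S C \<in> C)"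

fun greedy_iter :: "('a set \<Rightarrow> real) \<Rightarrow> real \<Rightarrow> real \<Rightarrow> 'a set \<Rightarrow> ('a set \<Rightarrow> 'a set \<Rightarrow> 'a)
                     \<Rightarrow> nat \<Rightarrow> 'a set \<Rightarrow> 'a set" where
  "greedy_iter f \<eta> \<epsilon> V sel 0 S = S"
| "greedy_iter f \<eta> \<epsilon> V sel (Suc m) S =
     (if \<eta> - \<epsilon> \<le> f S \<or> V \<subseteq> S then S
      else greedy_iter f \<eta> \<epsilon> V sel m (insert (sel S (greedy_choices f \<eta> V S)) S))"

definition greedy_out :: "('a set \<Rightarrow> real) \<Rightarrow> real \<Rightarrow> real \<Rightarrow> 'a set \<Rightarrow> ('a set \<Rightarrow> 'a set \<Rightarrow> 'a)
                          \<Rightarrow> 'a set option" where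
  "greedy_out f \<eta> \<epsilon> V sel =
     (let S = greedy_iter f \<eta> \<epsilon> V sel (card V) {} in
      if \<eta> - \<epsilon> \<le> f S then Some S else None)"

definition greedy_succeeds :: "(nat \<Rightarrow> 'a set \<Rightarrow> real) \<Rightarrow> real \<Rightarrow> real \<Rightarrow> 'a set
                               \<Rightarrow> ('a set \<Rightarrow> 'a set \<Rightarrow> 'a) \<Rightarrow> real \<Rightarrow> nat \<Rightarrow> nat \<Rightarrow> bool" where
  "greedy_succeeds f \<eta> \<epsilon> V sel \<beta> k R =
     (case greedy_out (f R) \<eta> \<epsilon> V sel of
        Some S \<Rightarrow> real (card S) \<le> \<beta> * real k
      | None \<Rightarrow> False)"

definition mintime_greedy :: "(nat \<Rightarrow> 'a set \<Rightarrow> real) \<Rightarrow> real \<Rightarrow> real \<Rightarrow> 'a set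
                              \<Rightarrow> ('a set \<Rightarrow> 'a set \<Rightarrow> 'a) \<Rightarrow> real \<Rightarrow> nat \<Rightarrow> ('a set \<times> nat) option" where
  "mintime_greedy f \<eta> \<epsilon> V sel \<beta> k =
     (if \<exists>R < card V. greedy_succeeds f \<eta> \<epsilon> V sel \<beta> k R
      then (let R = (LEAST R. greedy_succeeds f \<eta> \<epsilon> V sel \<beta> k R)
            in Some (the (greedy_out (f R) \<eta> \<epsilon> V sel), R))
      else None)"

end

theory Submission
  imports Defs
begin

text \<open>
  Since the coin of each arc is flipped at most once, \<open>\<sigma>\<^sup>R(S)\<close> is the expectation, over
  the random subgraph of successful arcs, of the number of nodes within \<open>R\<close> arcs of \<open>S\<close>.
  Reachable sets are unions over the seeds, so \<open>\<sigma>\<^sup>R\<close> is monotone and submodular, and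
  reachability saturates after \<open>n - 1\<close> steps, whence \<open>R\<^sub>O\<^sub>P\<^sub>T < n\<close>.

  At \<open>R = R\<^sub>O\<^sub>P\<^sub>T\<close> an optimal seed set \<open>Q\<close> with \<open>|Q| \<le> k\<close> covers \<open>\<eta>\<close>, so by
  submodularity some candidate closes a \<open>1/k\<close> fraction of the deficit \<open>\<eta> - \<sigma>\<^sup>R(S)\<close>
  (gains truncated at \<open>\<eta>\<close>). With \<open>(1-\<delta>)\<close>-approximate values the deficit contracts by
  \<open>1 - (1-\<delta>)/k\<close> per greedy step up to an additive \<open>\<delta>\<eta>\<close>, so it falls below \<open>\<epsilon>\<close> after
  \<open>(1+\<phi>)(1+ln(\<eta>/\<epsilon>))k\<close> steps once \<open>\<delta>\<close> is small enough (\<open>\<delta> = \<phi> = 0\<close> is the exact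
  case). Hence greedy succeeds within the budget at \<open>R\<^sub>O\<^sub>P\<^sub>T\<close>, and the linear search stops at
  some \<open>R \<le> R\<^sub>O\<^sub>P\<^sub>T\<close>.
\<close>

section \<open>Spread as expected reachability\<close>

fun reach :: "('a \<times> 'a) set \<Rightarrow> 'a set \<Rightarrow> nat \<Rightarrow> 'a set" where
  "reach W S 0 = S"
| "reach W S (Suc t) = reach W S t \<union> W `` reach W S t"

text \<open>The third conjunct is the invariant behind the induction: nodes activated before time \<open>t\<close>
  have already used their arcs, so anything adjacent to the active set is active or adjacent to
  the frontier.\<close>

lemma ic_state_eq_reach:
  "fst (ic_state W S t) = reach W S t \<and> snd (ic_state W S t) \<subseteq> reach W S t
   \<and> W `` reach W S t \<subseteq> reach W S t \<union> W `` snd (ic_state W S t)"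
proof (induction t)
  case 0
  show ?case by simp
next
  case (Suc t)
  define A where "A = fst (ic_state W S t)"
  define F where "F = snd (ic_state W S t)"
  have IH: "A = reach W S t" "F \<subseteq> A" "W `` A \<subseteq> A \<union> W `` F"
    using Suc.IH unfolding A_def F_def by auto
  have step: "ic_state W S (Suc t) = (A \<union> (W `` F - A), W `` F - A)"
    unfolding A_def F_def by (simp add: Let_def Image_def)
  have reach_Suc: "reach W S (Suc t) = A \<union> W `` F"
    using IH by auto
  have "W `` reach W S (Suc t) \<subseteq> reach W S (Suc t) \<union> W `` (W `` F - A)"
    using IH(3) unfolding reach_Suc by blast
  then show ?case
    unfolding step reach_Suc by auto
qed

lemma active_by_eq_reach: "active_by W S t = reach W S t"
  unfolding active_by_def by (simp add: ic_state_eq_reach)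

lemma reach_eq_UN: "reach W S t = (\<Union>s\<in>S. reach W {s} t)"
  by (induction t) auto

lemma reach_empty [simp]: "reach W {} t = {}"
  by (induction t) auto

lemma reach_mono: "A \<subseteq> B \<Longrightarrow> reach W A t \<subseteq> reach W B t"
  by (induction t) auto

lemma reach_subset: "W \<subseteq> V \<times> V \<Longrightarrow> S \<subseteq> V \<Longrightarrow> reach W S t \<subseteq> V"
  by (induction t) auto

lemma reach_mono_time: "t \<le> t' \<Longrightarrow> reach W S t \<subseteq> reach W S t'"
  by (induction t' rule: dec_induct) auto

lemma seeds_subset_reach: "S \<subseteq> reach W S t"
  using reach_mono_time[of 0 t W S] by simp

lemma reach_stable:
  assumes "reach W S (Suc t) = reach W S t" and "t \<le> t'"
  shows "reach W S t' = reach W S t"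
  using assms(2) by (induction t' rule: dec_induct) (use assms(1) in auto)

lemma card_reach_growth:
  assumes "finite (reach W S (Suc t))" and "reach W S (Suc t) \<noteq> reach W S t"
  shows "t + card S < card (reach W S (Suc t))"
  using assms
proof (induction t)
  case 0
  then show ?case
    by (simp add: psubset_card_mono psubsetI)
next
  case (Suc t)
  have fin: "finite (reach W S (Suc t))"
    using Suc.prems(1) by (rule finite_subset[rotated]) simp
  have "reach W S (Suc t) \<noteq> reach W S t"
    using Suc.prems(2) reach_stable[of W S t "Suc (Suc t)"] by auto
  with fin have "t + card S < card (reach W S (Suc t))"
    by (rule Suc.IH)
  moreover have "card (reach W S (Suc t)) < card (reach W S (Suc (Suc t)))"
    using Suc.prems by (intro psubset_card_mono) auto
  ultimately show ?case by simp
qed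

lemma reach_saturates:
  assumes "finite V" and "W \<subseteq> V \<times> V" and "S \<subseteq> V"
  shows "reach W S t \<subseteq> reach W S (card V - 1)"
proof (cases "t \<le> card V - 1 \<or> S = {}")
  case True
  then show ?thesis
    using reach_mono_time[of t "card V - 1" W S] by auto
next
  case False
  let ?n = "card V - 1"
  have card_S: "1 \<le> card S"
    using False assms finite_subset by (auto simp: Suc_le_eq card_gt_0_iff)
  have "0 < card V"
    using False assms(1,3) card_gt_0_iff by blast
  then have card_V: "Suc ?n = card V"
    by simp
  have fin: "finite (reach W S (Suc ?n))"
    using reach_subset[OF assms(2,3)] assms(1) by (rule finite_subset)
  have "card (reach W S (Suc ?n)) \<le> card V"
    using reach_subset[OF assms(2,3)] assms(1) by (rule card_mono[rotated])
  then have "\<not> ?n + card S < card (reach W S (Suc ?n))"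
    using card_V card_S by linarith
  then have "reach W S (Suc ?n) = reach W S ?n"
    using card_reach_growth[OF fin] by blast
  moreover have "?n \<le> t"
    using False by simp
  ultimately show ?thesis
    using reach_stable by blast
qed

lemma sigma_eq_reach:
  "sigma E p R S = (\<Sum>W\<in>Pow E. world_prob E p W * real (card (reach W S R)))"
  unfolding sigma_def active_by_eq_reach ..

lemma sigma_empty [simp]: "sigma E p R {} = 0"
  unfolding sigma_eq_reach by simp

lemma card_reach_submodular:
  assumes "finite (reach W (T \<union> Q) R)"
  shows "real (card (reach W (T \<union> Q) R)) - real (card (reach W T R))
    \<le> (\<Sum>w\<in>Q - T. real (card (reach W (insert w T) R)) - real (card (reach W T R)))"
proof -
  let ?r = "\<lambda>X. reach W X R"
  have fin: "finite (?r X)" if "X \<subseteq> T \<union> Q" for X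
    using assms reach_mono[OF that] by (rule finite_subset[rotated])
  have card_diff: "real (card (?r X)) - real (card (?r T)) = real (card (?r X - ?r T))"
    if "T \<subseteq> X" "X \<subseteq> T \<union> Q" for X
    using reach_mono[OF that(1), of W R] fin[OF that(2)]
    by (simp add: card_Diff_subset card_mono finite_subset of_nat_diff)
  have finQ: "finite Q"
    using fin[of Q] seeds_subset_reach[of Q W R] by (auto intro: finite_subset)
  have fin_insert: "finite (?r (insert w T))" if "w \<in> Q" for w
    using that by (intro fin) auto
  have new_reached: "?r (T \<union> Q) - ?r T \<subseteq> (\<Union>w\<in>Q - T. ?r (insert w T) - ?r T)"
  proof
    fix u assume u: "u \<in> ?r (T \<union> Q) - ?r T"
    then obtain w where w: "w \<in> T \<union> Q" "u \<in> reach W {w} R"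
      using reach_eq_UN[of W "T \<union> Q"] by auto
    with u have "w \<in> Q - T"
      using reach_eq_UN[of W T] by auto
    moreover have "u \<in> ?r (insert w T)"
      using w(2) reach_mono[of "{w}" "insert w T"] by auto
    ultimately show "u \<in> (\<Union>w\<in>Q - T. ?r (insert w T) - ?r T)"
      using u by auto
  qed
  have "real (card (?r (T \<union> Q))) - real (card (?r T)) = real (card (?r (T \<union> Q) - ?r T))"
    by (rule card_diff) auto
  also have "\<dots> \<le> real (card (\<Union>w\<in>Q - T. ?r (insert w T) - ?r T))"
    by (intro of_nat_mono card_mono[OF _ new_reached] finite_UN_I finite_Diff finQ fin_insert)
      auto
  also have "\<dots> \<le> real (\<Sum>w\<in>Q - T. card (?r (insert w T) - ?r T))"
    by (intro of_nat_mono card_UN_le finite_Diff finQ)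
  also have "\<dots> = (\<Sum>w\<in>Q - T. real (card (?r (insert w T))) - real (card (?r T)))"
    unfolding of_nat_sum by (rule sum.cong[OF refl], rule card_diff[symmetric]) auto
  finally show ?thesis .
qed

locale ic_model =
  fixes V :: "'a set" and E :: "('a \<times> 'a) set" and p :: "'a \<times> 'a \<Rightarrow> real"
  assumes finite_V: "finite V"
    and arcs_subset: "E \<subseteq> V \<times> V"
    and prob_bounds: "\<forall>e\<in>E. 0 \<le> p e \<and> p e \<le> 1"
begin

lemma world_prob_nonneg: "W \<in> Pow E \<Longrightarrow> 0 \<le> world_prob E p W"
  unfolding world_prob_def using prob_bounds by (intro mult_nonneg_nonneg prod_nonneg) auto

lemma finite_reach: "W \<in> Pow E \<Longrightarrow> S \<subseteq> V \<Longrightarrow> finite (reach W S R)"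
  using reach_subset[of W V S R] arcs_subset finite_V by (auto intro: finite_subset)

lemma sigma_mono:
  assumes "A \<subseteq> B" and "B \<subseteq> V"
  shows "sigma E p R A \<le> sigma E p R B"
  unfolding sigma_eq_reach
proof (intro sum_mono mult_left_mono)
  fix W assume W: "W \<in> Pow E"
  show "real (card (reach W A R)) \<le> real (card (reach W B R))"
    using card_mono[OF finite_reach[OF W assms(2)] reach_mono[OF assms(1)]] by simp
  show "0 \<le> world_prob E p W"
    using W by (rule world_prob_nonneg)
qed

lemma sigma_le_saturation:
  assumes "S \<subseteq> V"
  shows "sigma E p t S \<le> sigma E p (card V - 1) S"
  unfolding sigma_eq_reach
proof (intro sum_mono mult_left_mono)
  fix W assume W: "W \<in> Pow E"
  then have "W \<subseteq> V \<times> V"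
    using arcs_subset by auto
  then show "real (card (reach W S t)) \<le> real (card (reach W S (card V - 1)))"
    using card_mono[OF finite_reach[OF W assms] reach_saturates[OF finite_V _ assms]] by simp
  show "0 \<le> world_prob E p W"
    using W by (rule world_prob_nonneg)
qed

lemma sigma_submodular:
  assumes "T \<subseteq> V" and "Q \<subseteq> V"
  shows "sigma E p R (T \<union> Q) - sigma E p R T
    \<le> (\<Sum>w\<in>Q - T. sigma E p R (insert w T) - sigma E p R T)"
proof -
  let ?c = "\<lambda>W X. real (card (reach W X R))"
  have "sigma E p R (T \<union> Q) - sigma E p R T
      = (\<Sum>W\<in>Pow E. world_prob E p W * (?c W (T \<union> Q) - ?c W T))"
    unfolding sigma_eq_reach by (simp add: sum_subtractf right_diff_distrib)
  also have "\<dots> \<le> (\<Sum>W\<in>Pow E. world_prob E p W * (\<Sum>w\<in>Q - T. ?c W (insert w T) - ?c W T))"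
    using assms
    by (intro sum_mono mult_left_mono card_reach_submodular finite_reach world_prob_nonneg) auto
  also have "\<dots> = (\<Sum>w\<in>Q - T. sigma E p R (insert w T) - sigma E p R T)"
    unfolding sigma_eq_reach sum_distrib_left
    by (subst sum.swap) (simp add: sum_subtractf right_diff_distrib)
  finally show ?thesis .
qed

end

section \<open>Greedy seed selection\<close>

lemma greedy_choices_nonempty:
  assumes "finite V" and "\<not> V \<subseteq> T"
  shows "greedy_choices f \<eta> V T \<noteq> {}"
proof -
  let ?g = "gain f \<eta> T"
  have fin: "finite (?g ` (V - T))"
    using assms(1) by simp
  moreover have "?g ` (V - T) \<noteq> {}"
    using assms(2) by auto
  ultimately have "Max (?g ` (V - T)) \<in> ?g ` (V - T)"
    by (rule Max_in)
  then obtain w where max: "Max (?g ` (V - T)) = ?g w" and w: "w \<in> V - T"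
    by (rule imageE)
  have "\<forall>w'\<in>V - T. ?g w' \<le> ?g w"
    unfolding max[symmetric] using fin by simp
  with w have "w \<in> greedy_choices f \<eta> V T"
    unfolding greedy_choices_def by blast
  then show ?thesis
    by blast
qed

lemma greedy_pick_mem:
  assumes "finite V" and "valid_sel sel" and "\<not> V \<subseteq> T"
  shows "sel T (greedy_choices f \<eta> V T) \<in> greedy_choices f \<eta> V T"
proof -
  have "greedy_choices f \<eta> V T \<noteq> {}"
    using assms(1,3) by (rule greedy_choices_nonempty)
  then show ?thesis
    using assms(2) unfolding valid_sel_def by simp
qed

lemma greedy_iter_reaches_threshold:
  assumes "finite V" and "valid_sel sel" and "\<eta> - \<epsilon> \<le> f V"
    and "T \<subseteq> V" and "card V \<le> card T + m"
  shows "\<eta> - \<epsilon> \<le> f (greedy_iter f \<eta> \<epsilon> V sel m T)"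
  using assms(4,5)
proof (induction m arbitrary: T)
  case 0
  then have "T = V"
    using assms(1) by (simp add: card_seteq)
  then show ?case
    using assms(3) by simp
next
  case (Suc m)
  show ?case
  proof (cases "\<eta> - \<epsilon> \<le> f T \<or> V \<subseteq> T")
    case True
    then show ?thesis
      using Suc.prems(1) assms(3) by auto
  next
    case False
    define w where "w = sel T (greedy_choices f \<eta> V T)"
    have "w \<in> V - T"
      using greedy_pick_mem[OF assms(1,2)] False unfolding w_def greedy_choices_def by blast
    moreover have "finite T"
      using Suc.prems(1) assms(1) finite_subset by blast
    ultimately have "insert w T \<subseteq> V" and "card V \<le> card (insert w T) + m"
      using Suc.prems by auto
    then show ?thesis
      using Suc.IH False unfolding w_def by simp
  qed
qed

lemma greedy_iter_invariant:
  assumes "I T"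
    and "\<And>T. I T \<Longrightarrow> f T < \<eta> - \<epsilon> \<Longrightarrow> \<not> V \<subseteq> T
           \<Longrightarrow> I (insert (sel T (greedy_choices f \<eta> V T)) T)"
  shows "I (greedy_iter f \<eta> \<epsilon> V sel m T)"
  using assms(1)
proof (induction m arbitrary: T)
  case (Suc m)
  then show ?case
    using assms(2)[of T] by (simp add: not_le)
qed simp

lemma greedy_out_card_le:
  assumes "finite V" and "valid_sel sel" and "\<eta> - \<epsilon> \<le> f V"
    and "I {}"
    and step: "\<And>T w. I T \<Longrightarrow> T \<subseteq> V \<Longrightarrow> f T < \<eta> - \<epsilon> \<Longrightarrow> w \<in> greedy_choices f \<eta> V T
                 \<Longrightarrow> I (insert w T)"
    and stop: "\<And>T. I T \<Longrightarrow> T \<subseteq> V \<Longrightarrow> j \<le> card T \<Longrightarrow> \<eta> - \<epsilon> \<le> f T"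
  shows "\<exists>S. greedy_out f \<eta> \<epsilon> V sel = Some S \<and> card S \<le> j"
proof -
  let ?J = "\<lambda>T. I T \<and> T \<subseteq> V \<and> card T \<le> j"
  define S where "S = greedy_iter f \<eta> \<epsilon> V sel (card V) {}"
  have "?J S"
    unfolding S_def
  proof (rule greedy_iter_invariant)
    fix T assume J: "?J T" and below: "f T < \<eta> - \<epsilon>" and "\<not> V \<subseteq> T"
    then have w: "sel T (greedy_choices f \<eta> V T) \<in> greedy_choices f \<eta> V T"
      using greedy_pick_mem[OF assms(1,2)] by blast
    then have "sel T (greedy_choices f \<eta> V T) \<in> V - T"
      unfolding greedy_choices_def by blast
    moreover have "finite T"
      using J assms(1) finite_subset by blast
    moreover have "card T < j"
      using J below stop[of T] by fastforce
    ultimately show "?J (insert (sel T (greedy_choices f \<eta> V T)) T)"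
      using J step[OF _ _ below w] by auto
  qed (use assms(4) in simp)
  moreover have "\<eta> - \<epsilon> \<le> f S"
    unfolding S_def by (rule greedy_iter_reaches_threshold) (use assms in auto)
  ultimately show ?thesis
    unfolding greedy_out_def S_def[symmetric] by auto
qed

lemma exists_good_candidate:
  fixes s :: "'a set \<Rightarrow> real" and k :: nat
  assumes "finite Q" and "card Q \<le> k"
    and "\<eta> \<le> s (T \<union> Q)" and "s T < \<eta>"
    and submod: "s (T \<union> Q) - s T \<le> (\<Sum>w\<in>Q - T. s (insert w T) - s T)"
  shows "\<exists>w\<in>Q - T. (\<eta> - s T) / k \<le> min (s (insert w T)) \<eta> - s T"
proof (rule ccontr)
  assume "\<not> ?thesis"
  then have small: "min (s (insert w T)) \<eta> - s T < (\<eta> - s T) / k" if "w \<in> Q - T" for w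
    using that by (auto simp: not_le)
  have "Q - T \<noteq> {}"
  proof
    assume "Q - T = {}"
    then have "T \<union> Q = T"
      by auto
    then show False
      using assms(3,4) by simp
  qed
  then have nonempty: "0 < card (Q - T)"
    using assms(1) by (simp add: card_gt_0_iff)
  have card_le: "card (Q - T) \<le> k"
    using card_mono[OF assms(1), of "Q - T"] assms(2) by auto
  then have "(\<eta> - s T) / k \<le> \<eta> - s T"
    using nonempty assms(4) by (simp add: divide_le_eq mult_le_cancel_left1)
  then have gain_small: "s (insert w T) - s T < (\<eta> - s T) / k" if "w \<in> Q - T" for w
    using small[OF that] by (auto simp: min_def split: if_splits)
  have "(\<Sum>w\<in>Q - T. s (insert w T) - s T) < card (Q - T) * ((\<eta> - s T) / k)"
    using gain_small nonempty by (rule sum_bounded_above_strict)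
  also have "\<dots> \<le> k * ((\<eta> - s T) / k)"
    using card_le assms(4) by (intro mult_right_mono) auto
  also have "\<dots> = \<eta> - s T"
    using nonempty card_le by simp
  also have "\<dots> \<le> s (T \<union> Q) - s T"
    using assms(3) by simp
  finally show False
    using submod by simp
qed

lemma greedy_deficit_step:
  fixes f s :: "'a set \<Rightarrow> real" and k :: nat
  assumes "0 \<le> \<delta>" and "\<delta> < 1" and "0 \<le> \<eta>" and "0 < k"
    and approx: "\<And>S. (1 - \<delta>) * s S \<le> f S \<and> f S \<le> s S"
    and "finite Q" and "Q \<subseteq> V" and "card Q \<le> k" and "\<eta> \<le> s (T \<union> Q)" and "s T < \<eta>"
    and submod: "s (T \<union> Q) - s T \<le> (\<Sum>w\<in>Q - T. s (insert w T) - s T)"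
    and w: "w \<in> greedy_choices f \<eta> V T"
  shows "\<eta> - s (insert w T) \<le> (1 - (1 - \<delta>) / k) * (\<eta> - s T) + \<delta> * \<eta>"
proof -
  obtain w' where w': "w' \<in> Q - T" "(\<eta> - s T) / k \<le> min (s (insert w' T)) \<eta> - s T"
    using exists_good_candidate[OF assms(6,8-10) submod] by blast
  have "(1 - \<delta>) * (s T + (\<eta> - s T) / k) \<le> (1 - \<delta>) * min (s (insert w' T)) \<eta>"
    using assms(2) w'(2) by (intro mult_left_mono) auto
  also have "\<dots> \<le> min (f (insert w' T)) \<eta>"
  proof -
    have "(1 - \<delta>) * min (s (insert w' T)) \<eta> \<le> (1 - \<delta>) * s (insert w' T)"
      and "(1 - \<delta>) * min (s (insert w' T)) \<eta> \<le> (1 - \<delta>) * \<eta>"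
      using assms(2) by (intro mult_left_mono; simp)+
    moreover have "(1 - \<delta>) * \<eta> \<le> \<eta>"
      using assms(1,3) by (simp add: algebra_simps)
    ultimately show ?thesis
      using approx[of "insert w' T"] by simp
  qed
  also have "\<dots> \<le> min (f (insert w T)) \<eta>"
    using w w'(1) assms(7) unfolding greedy_choices_def gain_def by auto
  also have "\<dots> \<le> s (insert w T)"
    using approx[of "insert w T"] by linarith
  finally have "(1 - \<delta>) * (s T + (\<eta> - s T) / k) \<le> s (insert w T)" .
  moreover have "\<eta> - (1 - \<delta>) * (s T + (\<eta> - s T) / k) = (1 - (1 - \<delta>) / k) * (\<eta> - s T) + \<delta> * s T"
    using assms(4) by (simp add: field_simps)
  moreover have "\<delta> * s T \<le> \<delta> * \<eta>"
    using assms(1,10) by (intro mult_left_mono) auto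
  ultimately show ?thesis
    by linarith
qed

text \<open>The invariant is the geometric bound on the deficit obtained by iterating the contraction
  \<open>x \<mapsto> c x + \<delta>\<eta>\<close>; its additive part \<open>D\<close> is the fixed point of that map.\<close>

lemma greedy_cover_bound:
  fixes f s :: "'a set \<Rightarrow> real" and k j :: nat
  assumes "finite V" and "valid_sel sel"
    and "0 \<le> \<delta>" and "\<delta> < 1" and "0 \<le> \<eta>" and "\<delta> * \<eta> \<le> \<epsilon>" and "0 < k"
    and approx: "\<And>S. (1 - \<delta>) * s S \<le> f S \<and> f S \<le> s S"
    and mono: "\<And>A B. A \<subseteq> B \<Longrightarrow> B \<subseteq> V \<Longrightarrow> s A \<le> s B"
    and "0 \<le> s {}"
    and submod: "\<And>T. T \<subseteq> V \<Longrightarrow> s (T \<union> Q) - s T \<le> (\<Sum>w\<in>Q - T. s (insert w T) - s T)"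
    and "Q \<subseteq> V" and "card Q \<le> k" and "\<eta> \<le> s Q"
    and budget: "\<eta> - \<epsilon> \<le> (1 - \<delta>) * (\<eta> - (1 - (1 - \<delta>) / k) ^ j * \<eta> - \<delta> * \<eta> * k / (1 - \<delta>))"
  shows "\<exists>S. greedy_out f \<eta> \<epsilon> V sel = Some S \<and> card S \<le> j"
proof -
  define c where "c = 1 - (1 - \<delta>) / k"
  define D where "D = \<delta> * \<eta> * k / (1 - \<delta>)"
  have c: "0 \<le> c" "c \<le> 1"
    unfolding c_def using assms(3,4,7) by (auto simp: divide_le_eq)
  have D: "0 \<le> D" "c * D + \<delta> * \<eta> = D"
    unfolding c_def D_def using assms(3-5,7) by (auto simp: field_simps)
  have scaled_threshold: "(1 - \<delta>) * \<eta> \<le> f T \<Longrightarrow> \<eta> - \<epsilon> \<le> f T" for T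
    using assms(6) by (simp add: algebra_simps)
  show ?thesis
  proof (rule greedy_out_card_le[OF assms(1,2), where I = "\<lambda>T. \<eta> - s T \<le> c ^ card T * \<eta> + D"])
    have "\<eta> \<le> s V"
      using assms(14) mono[OF assms(12)] by fastforce
    then have "(1 - \<delta>) * \<eta> \<le> (1 - \<delta>) * s V"
      using assms(4) by (intro mult_left_mono) auto
    then show "\<eta> - \<epsilon> \<le> f V"
      using approx[of V] by (intro scaled_threshold) linarith
    show "\<eta> - s {} \<le> c ^ card {} * \<eta> + D"
      using assms(10) D(1) by simp
  next
    fix T w
    assume inv: "\<eta> - s T \<le> c ^ card T * \<eta> + D" and T: "T \<subseteq> V" and below: "f T < \<eta> - \<epsilon>"
      and w: "w \<in> greedy_choices f \<eta> V T"
    have "(1 - \<delta>) * s T < (1 - \<delta>) * \<eta>"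
      using approx[of T] below scaled_threshold[of T] by linarith
    then have sT: "s T < \<eta>"
      using assms(4) by simp
    have "\<eta> \<le> s (T \<union> Q)"
      using assms(12,14) T mono[of Q "T \<union> Q"] by auto
    then have "\<eta> - s (insert w T) \<le> c * (\<eta> - s T) + \<delta> * \<eta>"
      unfolding c_def using assms(1,3-5,7,12,13) approx finite_subset sT submod[OF T] w
      by (intro greedy_deficit_step) auto
    also have "\<dots> \<le> c * (c ^ card T * \<eta> + D) + \<delta> * \<eta>"
      using inv c(1) by (simp add: mult_left_mono)
    also have "\<dots> = c ^ Suc (card T) * \<eta> + D"
      using D(2) by (simp add: algebra_simps)
    also have "Suc (card T) = card (insert w T)"
      using w T assms(1) finite_subset unfolding greedy_choices_def by fastforce
    finally show "\<eta> - s (insert w T) \<le> c ^ card (insert w T) * \<eta> + D" .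
  next
    fix T
    assume inv: "\<eta> - s T \<le> c ^ card T * \<eta> + D" and "j \<le> card T"
    then have "c ^ card T * \<eta> \<le> c ^ j * \<eta>"
      using c assms(5) by (intro mult_right_mono power_decreasing) auto
    then have "(1 - \<delta>) * (\<eta> - c ^ j * \<eta> - D) \<le> (1 - \<delta>) * s T"
      using inv assms(4) by (intro mult_left_mono) auto
    then show "\<eta> - \<epsilon> \<le> f T"
      using budget approx[of T] unfolding c_def D_def by linarith
  qed
qed

section \<open>Choice of the budget and of the tolerance\<close>

lemma one_minus_power_le_exp:
  fixes y :: real
  assumes "y \<le> 1"
  shows "(1 - y) ^ j \<le> exp (- (y * j))"
proof -
  have "(1 - y) ^ j \<le> exp (- y) ^ j"
    using assms exp_ge_add_one_self[of "- y"] by (intro power_mono) auto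
  also have "\<dots> = exp (- (y * j))"
    by (simp add: exp_of_nat_mult[symmetric] mult.commute)
  finally show ?thesis .
qed

lemma budget_exponent_bound:
  fixes k :: nat and \<delta> \<eta> \<epsilon> \<phi> :: real
  assumes "0 < \<epsilon>" and "\<epsilon> \<le> \<eta>" and "0 < k" and "\<delta> < 1" and "0 \<le> \<phi>"
    and log_tol: "\<delta> * (ln (\<eta> / \<epsilon>) + \<phi>) \<le> \<phi> / 2"
  shows "ln (\<eta> / \<epsilon>) + \<phi> / 2 \<le> (1 - \<delta>) / k * nat \<lfloor>(1 + \<phi>) * (1 + ln (\<eta> / \<epsilon>)) * k\<rfloor>"
proof -
  define L where "L = ln (\<eta> / \<epsilon>)"
  define j where "j = nat \<lfloor>(1 + \<phi>) * (1 + L) * k\<rfloor>"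
  have L: "0 \<le> L"
    unfolding L_def using assms(1,2) by simp
  have "(1 + \<phi>) * (1 + L) * k - 1 \<le> j"
    unfolding j_def using L assms(5) by linarith
  moreover have "(L + \<phi>) * k \<le> (1 + \<phi>) * (1 + L) * k - 1"
  proof -
    have "1 \<le> real k" and "0 \<le> L * \<phi> * k"
      using L assms(3,5) by simp_all
    then show ?thesis
      by (simp add: algebra_simps)
  qed
  ultimately have "(L + \<phi>) * k \<le> j"
    by linarith
  then have "(1 - \<delta>) * (L + \<phi>) * k \<le> (1 - \<delta>) * j"
    using assms(4) by (simp add: mult.assoc mult_left_mono)
  moreover have "(L + \<phi> / 2) * k \<le> (1 - \<delta>) * (L + \<phi>) * k"
    using log_tol unfolding L_def[symmetric] by (intro mult_right_mono) (simp_all add: algebra_simps)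
  ultimately have "(L + \<phi> / 2) * k \<le> (1 - \<delta>) * j"
    by linarith
  then show ?thesis
    unfolding L_def[symmetric] j_def[symmetric] using assms(3) by (simp add: pos_le_divide_eq)
qed

lemma greedy_budget_suffices:
  fixes k :: nat and \<delta> \<eta> \<epsilon> \<phi> :: real
  defines "j \<equiv> nat \<lfloor>(1 + \<phi>) * (1 + ln (\<eta> / \<epsilon>)) * k\<rfloor>"
  assumes "0 < \<epsilon>" and "\<epsilon> \<le> \<eta>" and "0 < k" and "0 \<le> \<delta>" and "\<delta> < 1" and "0 \<le> \<phi>"
    and log_tol: "\<delta> * (ln (\<eta> / \<epsilon>) + \<phi>) \<le> \<phi> / 2"
    and add_tol: "\<delta> * \<eta> * (k + 1) \<le> \<epsilon> * (1 - exp (- \<phi> / 2))"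
  shows "\<eta> - \<epsilon> \<le> (1 - \<delta>) * (\<eta> - (1 - (1 - \<delta>) / k) ^ j * \<eta> - \<delta> * \<eta> * k / (1 - \<delta>))"
proof -
  let ?c = "1 - (1 - \<delta>) / k"
  have "(1 - \<delta>) / k \<le> 1"
    using assms(4,5) by (simp add: divide_le_eq)
  then have "?c ^ j \<le> exp (- ((1 - \<delta>) / k * j))"
    by (rule one_minus_power_le_exp)
  also have "\<dots> \<le> exp (- (ln (\<eta> / \<epsilon>) + \<phi> / 2))"
    using budget_exponent_bound[OF assms(2-4,6,7) log_tol] unfolding j_def by simp
  also have "\<dots> = exp (- ln (\<eta> / \<epsilon>)) * exp (- \<phi> / 2)"
    by (simp add: exp_add[symmetric])
  also have "exp (- ln (\<eta> / \<epsilon>)) = \<epsilon> / \<eta>"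
    using assms(2,3) by (simp add: exp_minus)
  finally have decay: "?c ^ j * \<eta> \<le> \<epsilon> * exp (- \<phi> / 2)"
    using assms(2,3) by (simp add: field_simps)
  have "0 \<le> ?c ^ j * \<eta>"
    using assms(2-5) by (simp add: divide_le_eq)
  then have "(1 - \<delta>) * (?c ^ j * \<eta>) \<le> ?c ^ j * \<eta>"
    using assms(5,6) by (intro mult_left_le_one_le) auto
  with decay have "(1 - \<delta>) * (?c ^ j * \<eta>) \<le> \<epsilon> * exp (- \<phi> / 2)"
    by linarith
  moreover have "(1 - \<delta>) * (\<delta> * \<eta> * k / (1 - \<delta>)) = \<delta> * \<eta> * k"
    using assms(6) by simp
  ultimately show ?thesis
    using add_tol by (simp add: algebra_simps)
qed

lemma approximation_tolerance_exists:
  fixes k :: nat and \<eta> \<epsilon> \<phi> :: real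
  assumes "0 < \<epsilon>" and "\<epsilon> \<le> \<eta>" and "0 < \<phi>"
  shows "\<exists>\<delta>>0. \<delta> < 1 \<and> \<delta> * (ln (\<eta> / \<epsilon>) + \<phi>) \<le> \<phi> / 2
           \<and> \<delta> * \<eta> * (k + 1) \<le> \<epsilon> * (1 - exp (- \<phi> / 2))"
proof -
  define a where "a = \<phi> / 2 / (ln (\<eta> / \<epsilon>) + \<phi>)"
  define b where "b = \<epsilon> * (1 - exp (- \<phi> / 2)) / (\<eta> * (k + 1))"
  define \<delta> where "\<delta> = min (1 / 2) (min a b)"
  have "0 \<le> ln (\<eta> / \<epsilon>)"
    using assms(1,2) by simp
  then have pos: "0 < ln (\<eta> / \<epsilon>) + \<phi>"
    using assms(3) by linarith
  have "0 < \<eta> * (k + 1)" and "0 < \<epsilon> * (1 - exp (- \<phi> / 2))"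
    using assms by simp_all
  then have "0 < a" "0 < b"
    unfolding a_def b_def using assms(3) pos \<open>0 < \<eta> * (k + 1)\<close> \<open>0 < \<epsilon> * (1 - exp (- \<phi> / 2))\<close>
    by simp_all
  then have "0 < \<delta>" "\<delta> < 1" "\<delta> \<le> a" "\<delta> \<le> b"
    unfolding \<delta>_def by simp_all
  moreover have "\<delta> * (ln (\<eta> / \<epsilon>) + \<phi>) \<le> \<phi> / 2"
    using \<open>\<delta> \<le> a\<close> pos unfolding a_def by (simp add: le_divide_eq algebra_simps)
  moreover have "\<delta> * (\<eta> * (k + 1)) \<le> \<epsilon> * (1 - exp (- \<phi> / 2))"
    using \<open>\<delta> \<le> b\<close> \<open>0 < \<eta> * (k + 1)\<close> unfolding b_def by (simp add: le_divide_eq)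
  ultimately show ?thesis
    by (intro exI[of _ \<delta>]) (simp add: mult.assoc)
qed

section \<open>Approximation guarantee for MINTIME\<close>

lemma mintime_greedy_first_success:
  fixes f \<sigma> :: "nat \<Rightarrow> 'a set \<Rightarrow> real"
  assumes upper: "\<And>R S. f R S \<le> \<sigma> R S" and "R\<^sub>0 < card V"
    and success: "greedy_succeeds f \<eta> \<epsilon> V sel \<beta> k R\<^sub>0"
  shows "\<exists>S R. mintime_greedy f \<eta> \<epsilon> V sel \<beta> k = Some (S, R)
           \<and> real (card S) \<le> \<beta> * k \<and> R \<le> R\<^sub>0 \<and> \<eta> - \<epsilon> \<le> \<sigma> R S"
proof -
  define R where "R = (LEAST R. greedy_succeeds f \<eta> \<epsilon> V sel \<beta> k R)"
  have "R \<le> R\<^sub>0"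
    unfolding R_def using success by (rule Least_le)
  have "greedy_succeeds f \<eta> \<epsilon> V sel \<beta> k R"
    unfolding R_def using success by (rule LeastI)
  then obtain S where S: "greedy_out (f R) \<eta> \<epsilon> V sel = Some S" "real (card S) \<le> \<beta> * k"
    unfolding greedy_succeeds_def by (auto split: option.splits)
  have "\<eta> - \<epsilon> \<le> f R S"
    using S(1) unfolding greedy_out_def Let_def by (auto split: if_splits)
  moreover have "mintime_greedy f \<eta> \<epsilon> V sel \<beta> k = Some (S, R)"
    unfolding mintime_greedy_def using assms(2) success S(1) by (auto simp: R_def[symmetric])
  ultimately show ?thesis
    using S(2) \<open>R \<le> R\<^sub>0\<close> upper[of R S] by (intro exI[of _ S] exI[of _ R]) simp
qed

lemma R_opt_attained:
  assumes "\<exists>t S. S \<subseteq> V \<and> card S \<le> k \<and> \<eta> \<le> sigma E p t S"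
  shows "\<exists>S\<subseteq>V. card S \<le> k \<and> \<eta> \<le> sigma E p (R_opt V E p k \<eta>) S"
  unfolding R_opt_def by (rule LeastI_ex) (use assms in blast)

context ic_model
begin

lemma budget_pos:
  assumes "0 < \<eta>" and "Q \<subseteq> V" and "card Q \<le> k" and "\<eta> \<le> sigma E p R Q"
  shows "0 < k"
proof -
  have "Q \<noteq> {}"
    using assms(1,4) by auto
  then have "0 < card Q"
    using assms(2) finite_V finite_subset card_gt_0_iff by blast
  then show ?thesis
    using assms(3) by simp
qed

lemma R_opt_less_card:
  assumes "0 < \<eta>" and "\<exists>t S. S \<subseteq> V \<and> card S \<le> k \<and> \<eta> \<le> sigma E p t S"
  shows "R_opt V E p k \<eta> < card V"
proof -
  obtain t Q where Q: "Q \<subseteq> V" "card Q \<le> k" "\<eta> \<le> sigma E p t Q"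
    using assms(2) by blast
  then have "\<eta> \<le> sigma E p (card V - 1) Q"
    using sigma_le_saturation[OF Q(1), of t] by linarith
  then have "R_opt V E p k \<eta> \<le> card V - 1"
    unfolding R_opt_def using Q(1,2) by (intro Least_le) blast
  moreover have "Q \<noteq> {}"
    using assms(1) Q(3) by auto
  then have "0 < card V"
    using Q(1) finite_V by (auto simp: card_gt_0_iff)
  ultimately show ?thesis
    by linarith
qed

lemma greedy_succeeds_at_R_opt:
  fixes \<sigma>' :: "nat \<Rightarrow> 'a set \<Rightarrow> real"
  assumes "0 < \<epsilon>" and "\<epsilon> \<le> \<eta>"
    and feasible: "\<exists>t S. S \<subseteq> V \<and> card S \<le> k \<and> \<eta> \<le> sigma E p t S"
    and "0 \<le> \<delta>" and "\<delta> < 1" and "0 \<le> \<phi>"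
    and log_tol: "\<delta> * (ln (\<eta> / \<epsilon>) + \<phi>) \<le> \<phi> / 2"
    and add_tol: "\<delta> * \<eta> * (k + 1) \<le> \<epsilon> * (1 - exp (- \<phi> / 2))"
    and approx: "\<forall>R S. (1 - \<delta>) * sigma E p R S \<le> \<sigma>' R S \<and> \<sigma>' R S \<le> sigma E p R S"
    and "valid_sel sel"
  shows "greedy_succeeds \<sigma>' \<eta> \<epsilon> V sel ((1 + \<phi>) * (1 + ln (\<eta> / \<epsilon>))) k (R_opt V E p k \<eta>)"
proof -
  define \<beta> where "\<beta> = (1 + \<phi>) * (1 + ln (\<eta> / \<epsilon>))"
  define R\<^sub>0 where "R\<^sub>0 = R_opt V E p k \<eta>"
  have \<eta>: "0 < \<eta>"
    using assms(1,2) by simp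
  obtain Q where Q: "Q \<subseteq> V" "card Q \<le> k" "\<eta> \<le> sigma E p R\<^sub>0 Q"
    using R_opt_attained[OF feasible] unfolding R\<^sub>0_def by blast
  have k: "0 < k"
    using budget_pos[OF \<eta> Q] .
  have "0 \<le> \<delta> * \<eta> * k"
    using assms(4) \<eta> by (intro mult_nonneg_nonneg) auto
  then have "\<delta> * \<eta> \<le> \<delta> * \<eta> * (k + 1)"
    by (simp add: algebra_simps)
  also have "\<dots> \<le> \<epsilon>"
    using add_tol mult_pos_pos[OF assms(1) exp_gt_zero[of "- \<phi> / 2"]]
    by (simp add: right_diff_distrib)
  finally have "\<delta> * \<eta> \<le> \<epsilon>" .
  then have "\<exists>S. greedy_out (\<sigma>' R\<^sub>0) \<eta> \<epsilon> V sel = Some S \<and> card S \<le> nat \<lfloor>\<beta> * k\<rfloor>"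
    using finite_V assms(4,5,10) \<eta> k approx Q sigma_mono sigma_submodular
      greedy_budget_suffices[OF assms(1,2) k assms(4-8)]
    unfolding \<beta>_def by (intro greedy_cover_bound[where s = "sigma E p R\<^sub>0"]) auto
  then obtain S where S: "greedy_out (\<sigma>' R\<^sub>0) \<eta> \<epsilon> V sel = Some S" "card S \<le> nat \<lfloor>\<beta> * k\<rfloor>"
    by blast
  have "0 \<le> \<beta> * k"
    unfolding \<beta>_def using assms(1,2,6) by simp
  then have "real (card S) \<le> \<beta> * k"
    using S(2) by linarith
  then show ?thesis
    unfolding greedy_succeeds_def \<beta>_def[symmetric] R\<^sub>0_def[symmetric] using S(1) by simp
qed

lemma mintime_greedy_approximation:
  fixes \<sigma>' :: "nat \<Rightarrow> 'a set \<Rightarrow> real"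
  assumes "0 < \<epsilon>" and "\<epsilon> \<le> \<eta>"
    and feasible: "\<exists>t S. S \<subseteq> V \<and> card S \<le> k \<and> \<eta> \<le> sigma E p t S"
    and "0 \<le> \<delta>" and "\<delta> < 1" and "0 \<le> \<phi>"
    and log_tol: "\<delta> * (ln (\<eta> / \<epsilon>) + \<phi>) \<le> \<phi> / 2"
    and add_tol: "\<delta> * \<eta> * (k + 1) \<le> \<epsilon> * (1 - exp (- \<phi> / 2))"
    and approx: "\<forall>R S. (1 - \<delta>) * sigma E p R S \<le> \<sigma>' R S \<and> \<sigma>' R S \<le> sigma E p R S"
    and "valid_sel sel"
  shows "\<exists>S R. mintime_greedy \<sigma>' \<eta> \<epsilon> V sel ((1 + \<phi>) * (1 + ln (\<eta> / \<epsilon>))) k = Some (S, R)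
           \<and> real (card S) \<le> (1 + \<phi>) * (1 + ln (\<eta> / \<epsilon>)) * real k
           \<and> real R \<le> 1 * real (R_opt V E p k \<eta>)
           \<and> (1 - \<epsilon> / \<eta>) * \<eta> \<le> sigma E p R S"
proof -
  have \<eta>: "0 < \<eta>"
    using assms(1,2) by simp
  have "\<And>R S. \<sigma>' R S \<le> sigma E p R S"
    using approx by blast
  moreover note R_opt_less_card[OF \<eta> feasible] greedy_succeeds_at_R_opt[OF assms]
  ultimately obtain S R
    where "mintime_greedy \<sigma>' \<eta> \<epsilon> V sel ((1 + \<phi>) * (1 + ln (\<eta> / \<epsilon>))) k = Some (S, R)"
      and "real (card S) \<le> (1 + \<phi>) * (1 + ln (\<eta> / \<epsilon>)) * k"
      and "R \<le> R_opt V E p k \<eta>" and "\<eta> - \<epsilon> \<le> sigma E p R S"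
    using mintime_greedy_first_success by blast
  moreover have "(1 - \<epsilon> / \<eta>) * \<eta> = \<eta> - \<epsilon>"
    using \<eta> by (simp add: field_simps)
  ultimately show ?thesis
    by auto
qed

end

theorem theorem6:
  fixes V :: "'a set" and E :: "('a \<times> 'a) set" and p :: "'a \<times> 'a \<Rightarrow> real"
    and k :: nat and \<eta> \<epsilon> :: real
  assumes "finite V"
    and "E \<subseteq> V \<times> V"
    and "\<forall>e\<in>E. 0 \<le> p e \<and> p e \<le> 1"
    and "\<eta> \<le> real (card V)"
    and "0 < \<epsilon>" and "\<epsilon> \<le> \<eta>"
    and "\<exists>t S. S \<subseteq> V \<and> card S \<le> k \<and> \<eta> \<le> sigma E p t S"
  shows
    "(\<forall>sel. valid_sel sel \<longrightarrow>
        (\<exists>S R. mintime_greedy (\<lambda>R. sigma E p R) \<eta> \<epsilon> V sel (1 + ln (\<eta> / \<epsilon>)) k = Some (S, R)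
           \<and> real (card S) \<le> (1 + ln (\<eta> / \<epsilon>)) * real k
           \<and> real R \<le> 1 * real (R_opt V E p k \<eta>)
           \<and> (1 - \<epsilon> / \<eta>) * \<eta> \<le> sigma E p R S))
     \<and>
     (\<forall>\<phi>>0. \<exists>\<delta>>0. \<forall>\<sigma>' :: nat \<Rightarrow> 'a set \<Rightarrow> real.
        (\<forall>R S. (1 - \<delta>) * sigma E p R S \<le> \<sigma>' R S \<and> \<sigma>' R S \<le> sigma E p R S) \<longrightarrow>
        (\<forall>sel. valid_sel sel \<longrightarrow>
          (\<exists>S R. mintime_greedy \<sigma>' \<eta> \<epsilon> V sel ((1 + \<phi>) * (1 + ln (\<eta> / \<epsilon>))) k = Some (S, R)
             \<and> real (card S) \<le> (1 + \<phi>) * (1 + ln (\<eta> / \<epsilon>)) * real k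
             \<and> real R \<le> 1 * real (R_opt V E p k \<eta>)
             \<and> (1 - \<epsilon> / \<eta>) * \<eta> \<le> sigma E p R S)))"
proof -
  interpret ic_model V E p
    using assms(1-3) by unfold_locales
  note approximation = mintime_greedy_approximation[OF assms(5-7)]
  show ?thesis
    apply (intro conjI allI impI)
    subgoal for sel
      using approximation[of 0 0 "\<lambda>R. sigma E p R" sel] by simp
    subgoal for \<phi>
    proof -
      assume \<phi>: "0 < \<phi>"
      then obtain \<delta> where \<delta>: "0 < \<delta>" "\<delta> < 1" "\<delta> * (ln (\<eta> / \<epsilon>) + \<phi>) \<le> \<phi> / 2"
          "\<delta> * \<eta> * (k + 1) \<le> \<epsilon> * (1 - exp (- \<phi> / 2))"
        using approximation_tolerance_exists[OF assms(5,6)] by blast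
      show ?thesis
        using \<delta>(1) approximation[OF less_imp_le[OF \<delta>(1)] \<delta>(2) less_imp_le[OF \<phi>] \<delta>(3,4)] by blast
    qed
    done
qed

end
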